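(* Assume the equation $\partial_tv+A(Av+l(t)v)=0$ satisfies the strong cone condition with constant $\mu>0$ and function $\alpha(t)$. Then there exists $\varepsilon_0>0$ such that for every $0<\varepsilon<\varepsilon_0$ every solution $v(t)$ of this equation satisfies $\frac{d}{dt}V_\varepsilon(v(t))+\big(\alpha(t)+\tfrac12\lambda_1\mu\big)V_\varepsilon(v(t))\le0$ and $\frac{d}{dt}V_{-\varepsilon}(v(t))+\big(\alpha(t)-\tfrac12\lambda_1\mu\big)V_{-\varepsilon}(v(t))\le0.$
   Context: Let $H$ be a real separable Hilbert space with inner product $(\cdot,\cdot)$ and norm $\|\cdot\|_H$, and let $A:D(A)\to H$ be a linear self-adjoint positive operator with compact inverse, with orthonormal eigenbasis $\{e_n\}$, $Ae_n=\lambda_ne_n$, $0<\lambda_1\le\lambda_2\le\dots\to\infty$. For $s\ge0$, $H^s=D(A^{s/2})$ with $\|u\|_{H^s}^2=\sum_n\lambda_n^s|(u,e_n)|^2$; for $s<0$, the completion of $H$. For fixed $N$: $P_N$ the orthoprojector onto $\mathrm{span}\{e_1,\dots,e_N\}$, $Q_N=\mathrm{Id}-P_N$, $\xi_+=P_N\xi$, $\xi_-=Q_N\xi$. $V(\xi)=\|\xi_-\|^2_{H^{-1}}-\|\xi_+\|^2_{H^{-1}}$ and, for $\varepsilon\in\mathbb{R}$, $V_\varepsilon(\xi)=\varepsilon\|\xi\|^2_{H^{-1}}+V(\xi)=(1+\varepsilon)\|\xi_-\|^2_{H^{-1}}-(1-\varepsilon)\|\xi_+\|^2_{H^{-1}}$.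 $l\in L^\infty(\mathbb{R},\mathcal L(H,H))$ with $\|l(t)\|_{\mathcal L(H,H)}\le L$. Strong cone condition for $\partial_tv+A(Av+l(t)v)=0$: there exist $\mu>0$ and $\alpha:\mathbb{R}\to\mathbb{R}$ with $0<\alpha_-\le\alpha(t)\le\alpha_+$ such that every solution $v(t)$, $t\in[S,T]$, satisfies $\frac{d}{dt}V(v(t))+\alpha(t)V(v(t))\le-\mu\|v(t)\|_H^2$ for all $t\in[S,T]$. *)

theory Defs
  imports "HOL-Analysis.Analysis"
begin

text \<open>
  The operator A is given through its orthonormal eigenbasis e and eigenvalues lam:
  A e n = lam n * e n.  Indexing starts at 0, so lam 0 is the paper's lambda_1 and
  P_N projects onto span of e 0, ..., e (N-1).
\<close>

definition spectral_basis :: "(nat \<Rightarrow> 'a::{real_inner,complete_space}) \<Rightarrow> (nat \<Rightarrow> real) \<Rightarrow> bool" where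
  "spectral_basis e lam \<longleftrightarrow>
     (\<forall>n m. e n \<bullet> e m = (if n = m then 1 else 0)) \<and>
     (\<forall>u. (\<forall>n. u \<bullet> e n = 0) \<longrightarrow> u = 0) \<and>
     0 < lam 0 \<and> (\<forall>n. lam n \<le> lam (Suc n)) \<and> filterlim lam at_top sequentially"

definition opA :: "(nat \<Rightarrow> 'a::{real_inner,complete_space}) \<Rightarrow> (nat \<Rightarrow> real) \<Rightarrow> 'a \<Rightarrow> 'a" where
  "opA e lam u = (\<Sum>n. (lam n * (u \<bullet> e n)) *\<^sub>R e n)"

definition hnorm2 :: "(nat \<Rightarrow> 'a::real_inner) \<Rightarrow> (nat \<Rightarrow> real) \<Rightarrow> real \<Rightarrow> 'a \<Rightarrow> real" where
  "hnorm2 e lam s u = (\<Sum>n. lam n powr s * (u \<bullet> e n)\<^sup>2)"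

definition projP :: "(nat \<Rightarrow> 'a::real_inner) \<Rightarrow> nat \<Rightarrow> 'a \<Rightarrow> 'a" where
  "projP e N u = (\<Sum>n<N. (u \<bullet> e n) *\<^sub>R e n)"

definition projQ :: "(nat \<Rightarrow> 'a::real_inner) \<Rightarrow> nat \<Rightarrow> 'a \<Rightarrow> 'a" where
  "projQ e N u = u - projP e N u"

definition Vfun :: "(nat \<Rightarrow> 'a::real_inner) \<Rightarrow> (nat \<Rightarrow> real) \<Rightarrow> nat \<Rightarrow> 'a \<Rightarrow> real" where
  "Vfun e lam N \<xi> = hnorm2 e lam (-1) (projQ e N \<xi>) - hnorm2 e lam (-1) (projP e N \<xi>)"

definition Veps :: "(nat \<Rightarrow> 'a::real_inner) \<Rightarrow> (nat \<Rightarrow> real) \<Rightarrow> nat \<Rightarrow> real \<Rightarrow> 'a \<Rightarrow> real" where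
  "Veps e lam N \<epsilon> \<xi> = \<epsilon> * hnorm2 e lam (-1) \<xi> + Vfun e lam N \<xi>"

text \<open>l in L^infinity(R, L(H,H)) with operator norm bounded by L (strongly measurable).\<close>
definition bounded_op_family :: "(real \<Rightarrow> 'a::{real_inner,complete_space} \<Rightarrow> 'a) \<Rightarrow> real \<Rightarrow> bool" where
  "bounded_op_family l L \<longleftrightarrow>
     (\<forall>t. bounded_linear (l t) \<and> onorm (l t) \<le> L) \<and>
     (\<forall>u. (\<lambda>t. l t u) \<in> borel_measurable borel)"

text \<open>Solutions of  v' + A(A v + l(t) v) = 0  on [S,T]: v(t) lies in H^1, v is continuous
  with values in H^1, and the equation holds tested against every eigenvector e_n:
  d/dt (v(t),e_n) = - lam_n (lam_n (v(t),e_n) + (l(t) v(t), e_n)).\<close>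
definition is_solution :: "(nat \<Rightarrow> 'a::{real_inner,complete_space}) \<Rightarrow> (nat \<Rightarrow> real) \<Rightarrow>
    (real \<Rightarrow> 'a \<Rightarrow> 'a) \<Rightarrow> real \<Rightarrow> real \<Rightarrow> (real \<Rightarrow> 'a) \<Rightarrow> bool" where
  "is_solution e lam l S T v \<longleftrightarrow>
     (\<forall>t\<in>{S..T}. summable (\<lambda>n. lam n * (v t \<bullet> e n)\<^sup>2)) \<and>
     (\<forall>t0\<in>{S..T}. ((\<lambda>t. hnorm2 e lam 1 (v t - v t0)) \<longlongrightarrow> 0) (at t0 within {S..T})) \<and>
     (\<forall>n. \<forall>t\<in>{S..T}. ((\<lambda>s. v s \<bullet> e n) has_real_derivative
         (- lam n * (lam n * (v t \<bullet> e n) + (l t (v t) \<bullet> e n)))) (at t within {S..T}))"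

definition strong_cone_condition :: "(nat \<Rightarrow> 'a::{real_inner,complete_space}) \<Rightarrow> (nat \<Rightarrow> real) \<Rightarrow> nat \<Rightarrow>
    (real \<Rightarrow> 'a \<Rightarrow> 'a) \<Rightarrow> real \<Rightarrow> (real \<Rightarrow> real) \<Rightarrow> bool" where
  "strong_cone_condition e lam N l \<mu> \<alpha> \<longleftrightarrow>
     0 < \<mu> \<and> (\<exists>am ap. 0 < am \<and> (\<forall>t. am \<le> \<alpha> t \<and> \<alpha> t \<le> ap)) \<and>
     (\<forall>S T v. S < T \<longrightarrow> is_solution e lam l S T v \<longrightarrow>
        (\<forall>t\<in>{S..T}. \<exists>D. ((\<lambda>s. Vfun e lam N (v s)) has_real_derivative D) (at t within {S..T}) \<and>
             D + \<alpha> t * Vfun e lam N (v t) \<le> - \<mu> * (norm (v t))\<^sup>2))"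

end

theory Submission
  imports Defs
begin

text \<open>
  Let Q and P be the squared H^-1 norms of the high and low modes, so V = Q - P and
  V_eps = (1 + eps) V + 2 eps P. Since P involves only the first N modes, its derivative along a
  solution is a finite sum bounded by 2 K |v|^2 with K = sum_{n<N} (lambda_n + L), and
  lambda_1 Q, lambda_1 P are at most |v|^2. Multiplying the strong cone inequality by 1 +- eps,
  the term -mu |v|^2 absorbs both the shift +- lambda_1 mu / 2 of the rate and the O(eps) |v|^2
  perturbation coming from 2 eps P.
\<close>

definition orthonormal_seq :: "(nat \<Rightarrow> 'a::real_inner) \<Rightarrow> bool" where
  "orthonormal_seq e \<longleftrightarrow> (\<forall>n m. e n \<bullet> e m = (if n = m then 1 else 0))"

lemma spectral_basis_orthonormal: "spectral_basis e lam \<Longrightarrow> orthonormal_seq e"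
  unfolding spectral_basis_def orthonormal_seq_def by blast

lemma spectral_basis_eigenvalues:
  assumes "spectral_basis e lam"
  shows "0 < lam 0" and "lam 0 \<le> lam n" and "0 < lam n"
proof -
  show "0 < lam 0" using assms unfolding spectral_basis_def by blast
  show "lam 0 \<le> lam n" using assms unfolding spectral_basis_def by (metis lift_Suc_mono_le zero_le)
  with \<open>0 < lam 0\<close> show "0 < lam n" by linarith
qed

lemma inner_projP:
  assumes "orthonormal_seq e"
  shows "projP e N u \<bullet> e m = (if m < N then u \<bullet> e m else 0)"
proof -
  have "projP e N u \<bullet> e m = (\<Sum>n<N. (u \<bullet> e n) * (if n = m then 1 else 0))"
    using assms unfolding projP_def orthonormal_seq_def by (simp add: inner_sum_left)
  also have "\<dots> = (if m < N then u \<bullet> e m else 0)"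
    by (simp add: if_distrib[of "\<lambda>x. _ * x"] sum.delta' cong: if_cong)
  finally show ?thesis .
qed

lemma inner_projQ:
  assumes "orthonormal_seq e"
  shows "projQ e N u \<bullet> e m = (if m < N then 0 else u \<bullet> e m)"
  using inner_projP[OF assms] unfolding projQ_def by (simp add: inner_diff_left)

lemma abs_inner_orthonormal_le:
  assumes "orthonormal_seq e"
  shows "\<bar>u \<bullet> e n\<bar> \<le> norm u"
proof -
  have "norm (e n) = 1"
    using assms unfolding orthonormal_seq_def by (metis norm_eq_sqrt_inner real_sqrt_one)
  then show ?thesis using Cauchy_Schwarz_ineq2[of u "e n"] by simp
qed

lemma bessel_partial_sum:
  assumes "orthonormal_seq e"
  shows "(\<Sum>n<M. (u \<bullet> e n)\<^sup>2) \<le> (norm u)\<^sup>2"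
proof -
  let ?P = "projP e M u"
  have PP: "?P \<bullet> ?P = (\<Sum>n<M. (u \<bullet> e n)\<^sup>2)"
    by (subst (1) projP_def)
       (simp add: inner_sum_left inner_commute[of "e _"] inner_projP[OF assms] power2_eq_square)
  have uP: "u \<bullet> ?P = (\<Sum>n<M. (u \<bullet> e n)\<^sup>2)"
    unfolding projP_def by (simp add: inner_sum_right power2_eq_square)
  have "0 \<le> (u - ?P) \<bullet> (u - ?P)" by simp
  also have "\<dots> = u \<bullet> u - 2 * (u \<bullet> ?P) + ?P \<bullet> ?P"
    by (simp add: inner_diff_left inner_diff_right inner_commute)
  finally show ?thesis using PP uP by (simp add: power2_norm_eq_inner)
qed

lemma bessel_inequality:
  assumes "orthonormal_seq e"
  shows "summable (\<lambda>n. (u \<bullet> e n)\<^sup>2)" and "(\<Sum>n. (u \<bullet> e n)\<^sup>2) \<le> (norm u)\<^sup>2"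
proof -
  show *: "summable (\<lambda>n. (u \<bullet> e n)\<^sup>2)"
    by (rule summableI_nonneg_bounded) (use bessel_partial_sum[OF assms] in auto)
  show "(\<Sum>n. (u \<bullet> e n)\<^sup>2) \<le> (norm u)\<^sup>2"
    by (rule suminf_le_const[OF *]) (use bessel_partial_sum[OF assms] in auto)
qed

lemma hnorm2_neg_one_term:
  assumes "spectral_basis e lam"
  shows "lam n powr -1 * (w \<bullet> e n)\<^sup>2 = (w \<bullet> e n)\<^sup>2 / lam n"
    and "0 \<le> lam n powr -1 * (w \<bullet> e n)\<^sup>2"
    and "lam 0 * (lam n powr -1 * (w \<bullet> e n)\<^sup>2) \<le> (w \<bullet> e n)\<^sup>2"
proof -
  note lam = spectral_basis_eigenvalues(1)[OF assms] spectral_basis_eigenvalues(2,3)[OF assms, of n]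
  show eq: "lam n powr -1 * (w \<bullet> e n)\<^sup>2 = (w \<bullet> e n)\<^sup>2 / lam n"
    using lam by (simp add: powr_neg_one)
  show "0 \<le> lam n powr -1 * (w \<bullet> e n)\<^sup>2" using lam by simp
  have "lam 0 * ((w \<bullet> e n)\<^sup>2 / lam n) \<le> lam n * ((w \<bullet> e n)\<^sup>2 / lam n)"
    using lam by (intro mult_right_mono) auto
  then show "lam 0 * (lam n powr -1 * (w \<bullet> e n)\<^sup>2) \<le> (w \<bullet> e n)\<^sup>2"
    using lam eq by simp
qed

lemma summable_hnorm2_neg_one:
  assumes "spectral_basis e lam"
  shows "summable (\<lambda>n. lam n powr -1 * (w \<bullet> e n)\<^sup>2)"
proof (rule summable_comparison_test')
  show "summable (\<lambda>n. (w \<bullet> e n)\<^sup>2 / lam 0)"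
    using bessel_inequality(1)[OF spectral_basis_orthonormal[OF assms]] by (rule summable_divide)
  show "norm (lam n powr -1 * (w \<bullet> e n)\<^sup>2) \<le> (w \<bullet> e n)\<^sup>2 / lam 0" for n
    using hnorm2_neg_one_term[OF assms, of n w] spectral_basis_eigenvalues[OF assms]
    by (simp add: field_simps)
qed

lemma hnorm2_neg_one_nonneg:
  assumes "spectral_basis e lam"
  shows "0 \<le> hnorm2 e lam (-1) w"
  unfolding hnorm2_def
  using hnorm2_neg_one_term(2)[OF assms] summable_hnorm2_neg_one[OF assms] by (simp add: suminf_nonneg)

lemma poincare_hnorm2_neg_one:
  assumes "spectral_basis e lam"
  shows "lam 0 * hnorm2 e lam (-1) w \<le> (norm w)\<^sup>2"
proof -
  note O = spectral_basis_orthonormal[OF assms]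
  have "lam 0 * hnorm2 e lam (-1) w = (\<Sum>n. lam 0 * (lam n powr -1 * (w \<bullet> e n)\<^sup>2))"
    unfolding hnorm2_def by (rule suminf_mult[OF summable_hnorm2_neg_one[OF assms], symmetric])
  also have "\<dots> \<le> (\<Sum>n. (w \<bullet> e n)\<^sup>2)"
    by (intro suminf_le summable_mult summable_hnorm2_neg_one[OF assms]
        bessel_inequality(1)[OF O] hnorm2_neg_one_term(3)[OF assms])
  also have "\<dots> \<le> (norm w)\<^sup>2" by (rule bessel_inequality(2)[OF O])
  finally show ?thesis .
qed

lemma hnorm2_neg_one_projP:
  assumes "spectral_basis e lam"
  shows "hnorm2 e lam (-1) (projP e N u) = (\<Sum>n<N. (u \<bullet> e n)\<^sup>2 / lam n)"
proof -
  note O = spectral_basis_orthonormal[OF assms]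
  have "hnorm2 e lam (-1) (projP e N u) = (\<Sum>n<N. lam n powr -1 * (projP e N u \<bullet> e n)\<^sup>2)"
    unfolding hnorm2_def by (rule suminf_finite) (auto simp: inner_projP[OF O])
  also have "\<dots> = (\<Sum>n<N. (u \<bullet> e n)\<^sup>2 / lam n)"
    by (rule sum.cong) (auto simp del: powr_neg_one' simp: inner_projP[OF O] hnorm2_neg_one_term(1)[OF assms])
  finally show ?thesis .
qed

lemma hnorm2_neg_one_split:
  assumes "spectral_basis e lam"
  shows "hnorm2 e lam (-1) u = hnorm2 e lam (-1) (projQ e N u) + hnorm2 e lam (-1) (projP e N u)"
proof -
  note O = spectral_basis_orthonormal[OF assms]
  have "hnorm2 e lam (-1) (projQ e N u) + hnorm2 e lam (-1) (projP e N u) =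
     (\<Sum>n. lam n powr -1 * (projQ e N u \<bullet> e n)\<^sup>2 + lam n powr -1 * (projP e N u \<bullet> e n)\<^sup>2)"
    unfolding hnorm2_def by (rule suminf_add[OF summable_hnorm2_neg_one[OF assms] summable_hnorm2_neg_one[OF assms]])
  also have "\<dots> = hnorm2 e lam (-1) u"
    unfolding hnorm2_def by (rule suminf_cong) (simp add: inner_projP[OF O] inner_projQ[OF O])
  finally show ?thesis by simp
qed

lemma poincare_hnorm2_neg_one_proj:
  assumes "spectral_basis e lam"
  shows "lam 0 * hnorm2 e lam (-1) (projQ e N u) \<le> (norm u)\<^sup>2"
    and "lam 0 * hnorm2 e lam (-1) (projP e N u) \<le> (norm u)\<^sup>2"
  using poincare_hnorm2_neg_one[OF assms, of u] hnorm2_neg_one_split[OF assms, of u N]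
    hnorm2_neg_one_nonneg[OF assms] spectral_basis_eigenvalues(1)[OF assms]
  by (smt (verit, best) mult_left_mono)+

lemma Veps_eq:
  assumes "spectral_basis e lam"
  shows "Veps e lam N \<epsilon> u = (1 + \<epsilon>) * Vfun e lam N u + 2 * \<epsilon> * hnorm2 e lam (-1) (projP e N u)"
  unfolding Veps_def Vfun_def hnorm2_neg_one_split[OF assms, of u N] by (simp add: algebra_simps)

lemma bounded_op_family_bound:
  fixes l :: "real \<Rightarrow> 'a::{real_inner,complete_space} \<Rightarrow> 'a"
  assumes "bounded_op_family l L"
  shows "0 \<le> L" and "norm (l t u) \<le> L * norm u"
proof -
  have bl: "bounded_linear (l t)" and le: "onorm (l t) \<le> L" for t
    using assms unfolding bounded_op_family_def by auto
  show "0 \<le> L" using onorm_pos_le[OF bl[of 0]] le[of 0] by linarith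
  show "norm (l t u) \<le> L * norm u"
    using onorm[OF bl[of t], of u] le[of t] by (meson mult_right_mono norm_ge_zero order_trans)
qed

lemma low_mode_energy_derivative:
  assumes sb: "spectral_basis e lam" and l: "bounded_op_family l L"
    and sol: "is_solution e lam l S T v" and t: "t \<in> {S..T}"
  obtains D where
    "((\<lambda>s. hnorm2 e lam (-1) (projP e N (v s))) has_real_derivative D) (at t within {S..T})"
    and "\<bar>D\<bar> \<le> 2 * (\<Sum>n<N. lam n + L) * (norm (v t))\<^sup>2"
proof -
  note O = spectral_basis_orthonormal[OF sb]
  define c where "c n = v t \<bullet> e n" for n
  define c' where "c' n = - lam n * (lam n * c n + (l t (v t) \<bullet> e n))" for n
  define D where "D = (\<Sum>n<N. 2 * c n * c' n / lam n)"
  have "((\<lambda>s. v s \<bullet> e n) has_real_derivative c' n) (at t within {S..T})" for n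
    using sol t unfolding is_solution_def c'_def c_def by blast
  then have "((\<lambda>s. (v s \<bullet> e n)\<^sup>2 / lam n) has_real_derivative 2 * c n * c' n / lam n)
      (at t within {S..T})" for n
    unfolding c_def using spectral_basis_eigenvalues(3)[OF sb, of n]
    by (auto intro!: derivative_eq_intros)
  then have "((\<lambda>s. \<Sum>n<N. (v s \<bullet> e n)\<^sup>2 / lam n) has_real_derivative D) (at t within {S..T})"
    unfolding D_def by (rule DERIV_sum)
  moreover have "\<bar>D\<bar> \<le> 2 * (\<Sum>n<N. lam n + L) * (norm (v t))\<^sup>2"
  proof -
    have "\<bar>2 * c n * c' n / lam n\<bar> \<le> 2 * ((lam n + L) * (norm (v t))\<^sup>2)" for n
    proof -
      have lam: "0 < lam n" by (rule spectral_basis_eigenvalues(3)[OF sb])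
      have c: "\<bar>c n\<bar> \<le> norm (v t)" unfolding c_def by (rule abs_inner_orthonormal_le[OF O])
      have "\<bar>l t (v t) \<bullet> e n\<bar> \<le> L * norm (v t)"
        using abs_inner_orthonormal_le[OF O] bounded_op_family_bound(2)[OF l] order_trans by blast
      moreover have "\<bar>lam n * c n\<bar> \<le> lam n * norm (v t)" using lam c by (simp add: abs_mult)
      ultimately have "\<bar>lam n * c n + (l t (v t) \<bullet> e n)\<bar> \<le> (lam n + L) * norm (v t)"
        by (simp add: distrib_right)
      then have "\<bar>c n\<bar> * \<bar>lam n * c n + (l t (v t) \<bullet> e n)\<bar> \<le> norm (v t) * ((lam n + L) * norm (v t))"
        using c by (intro mult_mono) auto
      moreover have "\<bar>2 * c n * c' n / lam n\<bar> = 2 * (\<bar>c n\<bar> * \<bar>lam n * c n + (l t (v t) \<bullet> e n)\<bar>)"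
        using lam by (simp add: c'_def abs_mult)
      ultimately show ?thesis by (simp add: power2_eq_square algebra_simps)
    qed
    then have "\<bar>D\<bar> \<le> (\<Sum>n<N. 2 * ((lam n + L) * (norm (v t))\<^sup>2))"
      unfolding D_def by (intro order_trans[OF sum_abs sum_mono])
    then show ?thesis by (simp add: sum_distrib_left sum_distrib_right algebra_simps)
  qed
  ultimately show thesis using that unfolding hnorm2_neg_one_projP[OF sb] by blast
qed

text \<open>In the next two lemmas x stands for |v|^2, Q and P for the H^-1 energies of the high and
  low modes, and DV, dP for the derivatives of V and P.\<close>

lemma perturbed_cone_estimate_plus:
  fixes DV dP \<alpha> ap \<mu> l0 x Q P K \<epsilon> :: real
  assumes x: "0 \<le> x" and l0: "0 < l0" and \<mu>: "0 \<le> \<mu>" and \<epsilon>: "0 \<le> \<epsilon>" "\<epsilon> \<le> 1"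
    and \<alpha>: "\<alpha> \<le> ap" "0 \<le> ap" and small: "\<epsilon> * (4 * K + 2 * ap / l0) \<le> \<mu> / 2"
    and cone: "DV + \<alpha> * (Q - P) \<le> - \<mu> * x" and dP: "\<bar>dP\<bar> \<le> 2 * K * x"
    and Q: "l0 * Q \<le> x" and P: "0 \<le> P" "l0 * P \<le> x"
  shows "(1 + \<epsilon>) * DV + 2 * \<epsilon> * dP + (\<alpha> + l0 * \<mu> / 2) * ((1 + \<epsilon>) * (Q - P) + 2 * \<epsilon> * P) \<le> 0"
proof -
  have "(1 + \<epsilon>) * (DV + \<alpha> * (Q - P)) \<le> (1 + \<epsilon>) * (- \<mu> * x)"
    using cone \<epsilon> by (intro mult_left_mono) auto
  moreover have "\<epsilon> * (2 * dP + 2 * \<alpha> * P) \<le> \<mu> / 2 * x"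
  proof -
    have "\<alpha> * P \<le> ap * (x / l0)"
      using \<alpha> P l0 by (intro mult_mono) (auto simp: field_simps)
    then have "2 * dP + 2 * \<alpha> * P \<le> 4 * K * x + 2 * (ap * (x / l0))"
      using dP by linarith
    also have "\<dots> = (4 * K + 2 * ap / l0) * x" by (simp add: algebra_simps)
    finally have "2 * dP + 2 * \<alpha> * P \<le> (4 * K + 2 * ap / l0) * x" .
    then have "\<epsilon> * (2 * dP + 2 * \<alpha> * P) \<le> \<epsilon> * (4 * K + 2 * ap / l0) * x"
      using \<epsilon> by (simp add: mult_left_mono mult.assoc)
    also have "\<dots> \<le> \<mu> / 2 * x" using small x by (rule mult_right_mono)
    finally show ?thesis .
  qed
  moreover have "\<mu> / 2 * (l0 * ((1 + \<epsilon>) * Q - (1 - \<epsilon>) * P)) \<le> \<mu> / 2 * ((1 + \<epsilon>) * x)"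
  proof -
    have "(1 + \<epsilon>) * (l0 * Q) \<le> (1 + \<epsilon>) * x" using Q \<epsilon> by (intro mult_left_mono) auto
    moreover have "0 \<le> (1 - \<epsilon>) * (l0 * P)" using P l0 \<epsilon> by simp
    ultimately have "l0 * ((1 + \<epsilon>) * Q - (1 - \<epsilon>) * P) \<le> (1 + \<epsilon>) * x"
      by (simp add: algebra_simps)
    then show ?thesis using \<mu> by (intro mult_left_mono) auto
  qed
  moreover have "(1 + \<epsilon>) * DV + 2 * \<epsilon> * dP + (\<alpha> + l0 * \<mu> / 2) * ((1 + \<epsilon>) * (Q - P) + 2 * \<epsilon> * P)
      = (1 + \<epsilon>) * (DV + \<alpha> * (Q - P)) + \<epsilon> * (2 * dP + 2 * \<alpha> * P)
        + \<mu> / 2 * (l0 * ((1 + \<epsilon>) * Q - (1 - \<epsilon>) * P))"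
    by (simp add: algebra_simps)
  moreover have "(1 + \<epsilon>) * (- \<mu> * x) + \<mu> / 2 * x + \<mu> / 2 * ((1 + \<epsilon>) * x) = - (\<epsilon> * \<mu> * x) / 2"
    by (simp add: algebra_simps)
  moreover have "0 \<le> \<epsilon> * \<mu> * x" using \<epsilon> \<mu> x by simp
  ultimately show ?thesis by linarith
qed

lemma perturbed_cone_estimate_minus:
  fixes DV dP \<alpha> \<mu> l0 x Q P K \<epsilon> :: real
  assumes x: "0 \<le> x" and l0: "0 < l0" and \<mu>: "0 \<le> \<mu>" and \<epsilon>: "0 \<le> \<epsilon>" "\<epsilon> \<le> 1"
    and \<alpha>: "0 \<le> \<alpha>" and small: "\<epsilon> * (4 * K + 3 * \<mu> / 2) \<le> \<mu> / 2"
    and cone: "DV + \<alpha> * (Q - P) \<le> - \<mu> * x" and dP: "\<bar>dP\<bar> \<le> 2 * K * x"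
    and Q: "0 \<le> Q" and P: "0 \<le> P" "l0 * P \<le> x"
  shows "(1 - \<epsilon>) * DV - 2 * \<epsilon> * dP + (\<alpha> - l0 * \<mu> / 2) * ((1 - \<epsilon>) * (Q - P) - 2 * \<epsilon> * P) \<le> 0"
proof -
  have "(1 - \<epsilon>) * (DV + \<alpha> * (Q - P)) \<le> (1 - \<epsilon>) * (- \<mu> * x)"
    using cone \<epsilon> by (intro mult_left_mono) auto
  moreover have "- (\<epsilon> * (2 * dP + 2 * \<alpha> * P)) \<le> \<epsilon> * (4 * K * x)"
  proof -
    have "0 \<le> \<alpha> * P" using \<alpha> P by simp
    then have "- (2 * dP + 2 * \<alpha> * P) \<le> 4 * K * x" using dP by (simp add: abs_le_iff)
    then show ?thesis using \<epsilon> by (metis minus_mult_right mult_left_mono)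
  qed
  moreover have "\<mu> / 2 * (l0 * ((1 + \<epsilon>) * P - (1 - \<epsilon>) * Q)) \<le> \<mu> / 2 * ((1 + \<epsilon>) * x)"
  proof -
    have "(1 + \<epsilon>) * (l0 * P) \<le> (1 + \<epsilon>) * x" using P \<epsilon> by (intro mult_left_mono) auto
    moreover have "0 \<le> (1 - \<epsilon>) * (l0 * Q)" using Q l0 \<epsilon> by simp
    ultimately have "l0 * ((1 + \<epsilon>) * P - (1 - \<epsilon>) * Q) \<le> (1 + \<epsilon>) * x"
      by (simp add: algebra_simps)
    then show ?thesis using \<mu> by (intro mult_left_mono) auto
  qed
  moreover have "(1 - \<epsilon>) * DV - 2 * \<epsilon> * dP + (\<alpha> - l0 * \<mu> / 2) * ((1 - \<epsilon>) * (Q - P) - 2 * \<epsilon> * P)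
      = (1 - \<epsilon>) * (DV + \<alpha> * (Q - P)) - \<epsilon> * (2 * dP + 2 * \<alpha> * P)
        + \<mu> / 2 * (l0 * ((1 + \<epsilon>) * P - (1 - \<epsilon>) * Q))"
    by (simp add: algebra_simps)
  moreover have "(1 - \<epsilon>) * (- \<mu> * x) + \<epsilon> * (4 * K * x) + \<mu> / 2 * ((1 + \<epsilon>) * x)
      = x * (\<epsilon> * (4 * K + 3 * \<mu> / 2)) - x * (\<mu> / 2)"
    by (simp add: field_simps)
  moreover have "x * (\<epsilon> * (4 * K + 3 * \<mu> / 2)) \<le> x * (\<mu> / 2)"
    using small x by (rule mult_left_mono)
  ultimately show ?thesis by linarith
qed

lemma Veps_derivative_estimates:
  fixes e :: "nat \<Rightarrow> 'a::{real_inner,complete_space}"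
  assumes sb: "spectral_basis e lam" and l: "bounded_op_family l L"
    and cone: "strong_cone_condition e lam N l \<mu> \<alpha>" and \<alpha>: "\<And>t. \<alpha> t \<le> ap"
    and \<epsilon>: "0 < \<epsilon>" "\<epsilon> \<le> 1"
    and small: "\<epsilon> * (4 * (\<Sum>n<N. lam n + L) + 2 * ap / lam 0 + 3 * \<mu> / 2) \<le> \<mu> / 2"
    and ST: "S < T" and sol: "is_solution e lam l S T v" and t: "t \<in> {S..T}"
  shows "(\<exists>D. ((\<lambda>s. Veps e lam N \<epsilon> (v s)) has_real_derivative D) (at t within {S..T}) \<and>
            D + (\<alpha> t + lam 0 * \<mu> / 2) * Veps e lam N \<epsilon> (v t) \<le> 0) \<and>
         (\<exists>D. ((\<lambda>s. Veps e lam N (- \<epsilon>) (v s)) has_real_derivative D) (at t within {S..T}) \<and>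
            D + (\<alpha> t - lam 0 * \<mu> / 2) * Veps e lam N (- \<epsilon>) (v t) \<le> 0)"
proof -
  define K where "K = (\<Sum>n<N. lam n + L)"
  define x where "x = (norm (v t))\<^sup>2"
  define Q where "Q = hnorm2 e lam (-1) (projQ e N (v t))"
  define P where "P = hnorm2 e lam (-1) (projP e N (v t))"
  have \<mu>: "0 < \<mu>" and \<alpha>_pos: "0 < \<alpha> t"
    using cone unfolding strong_cone_condition_def by (auto intro: less_le_trans)
  obtain DV where DV: "((\<lambda>s. Vfun e lam N (v s)) has_real_derivative DV) (at t within {S..T})"
    and cone_t: "DV + \<alpha> t * (Q - P) \<le> - \<mu> * x"
    using cone ST sol t unfolding strong_cone_condition_def Vfun_def Q_def P_def x_def by blast
  obtain dP where dP: "((\<lambda>s. hnorm2 e lam (-1) (projP e N (v s))) has_real_derivative dP) (at t within {S..T})"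
    and dP_le: "\<bar>dP\<bar> \<le> 2 * K * x"
    using low_mode_energy_derivative[OF sb l sol t] unfolding K_def x_def by blast
  have deriv: "((\<lambda>s. Veps e lam N \<sigma> (v s)) has_real_derivative (1 + \<sigma>) * DV + 2 * \<sigma> * dP)
      (at t within {S..T})" for \<sigma>
    unfolding Veps_eq[OF sb] by (intro DERIV_add DERIV_cmult DV dP)
  have Veps_t: "Veps e lam N \<sigma> (v t) = (1 + \<sigma>) * (Q - P) + 2 * \<sigma> * P" for \<sigma>
    unfolding Veps_eq[OF sb] Vfun_def Q_def P_def ..
  note l0 = spectral_basis_eigenvalues(1)[OF sb]
  have QP: "0 \<le> Q" "0 \<le> P" "lam 0 * Q \<le> x" "lam 0 * P \<le> x"
    unfolding Q_def P_def x_def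
    using hnorm2_neg_one_nonneg[OF sb] poincare_hnorm2_neg_one_proj[OF sb] by auto
  have K: "0 \<le> K"
    unfolding K_def using spectral_basis_eigenvalues(3)[OF sb] bounded_op_family_bound(1)[OF l]
    by (intro sum_nonneg) (simp add: add_nonneg_nonneg less_imp_le)
  have ap: "0 \<le> ap" using \<alpha>_pos \<alpha>[of t] by linarith
  have smallness: "\<epsilon> * (4 * K + 2 * ap / lam 0) \<le> \<mu> / 2" "\<epsilon> * (4 * K + 3 * \<mu> / 2) \<le> \<mu> / 2"
    using small \<epsilon> \<mu> ap l0 unfolding K_def
    by (smt (verit) divide_nonneg_pos mult_left_mono)+
  show ?thesis
  proof (intro conjI exI)
    show "(1 + \<epsilon>) * DV + 2 * \<epsilon> * dP + (\<alpha> t + lam 0 * \<mu> / 2) * Veps e lam N \<epsilon> (v t) \<le> 0"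
      unfolding Veps_t
      by (rule perturbed_cone_estimate_plus[OF _ l0 _ _ \<epsilon>(2) \<alpha> ap smallness(1) cone_t dP_le])
         (use QP \<mu> \<epsilon> x_def in auto)
    have "(1 - \<epsilon>) * DV - 2 * \<epsilon> * dP + (\<alpha> t - lam 0 * \<mu> / 2) * ((1 - \<epsilon>) * (Q - P) - 2 * \<epsilon> * P) \<le> 0"
      by (rule perturbed_cone_estimate_minus[OF _ l0 _ _ \<epsilon>(2) _ smallness(2) cone_t dP_le])
         (use QP \<mu> \<epsilon> \<alpha>_pos x_def in auto)
    then show "(1 + - \<epsilon>) * DV + 2 * - \<epsilon> * dP + (\<alpha> t - lam 0 * \<mu> / 2) * Veps e lam N (- \<epsilon>) (v t) \<le> 0"
      unfolding Veps_t by simp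
  qed (rule deriv)+
qed

theorem lemma3p2:
  fixes e :: "nat \<Rightarrow> 'a::{real_inner,complete_space}"
    and lam :: "nat \<Rightarrow> real" and N :: nat
    and l :: "real \<Rightarrow> 'a \<Rightarrow> 'a" and L :: real
    and \<mu> :: real and \<alpha> :: "real \<Rightarrow> real"
  assumes "spectral_basis e lam"
    and "bounded_op_family l L"
    and "strong_cone_condition e lam N l \<mu> \<alpha>"
  shows "\<exists>\<epsilon>0>0. \<forall>\<epsilon>. 0 < \<epsilon> \<and> \<epsilon> < \<epsilon>0 \<longrightarrow>
     (\<forall>S T v. S < T \<longrightarrow> is_solution e lam l S T v \<longrightarrow>
        (\<forall>t\<in>{S..T}.
           (\<exists>D. ((\<lambda>s. Veps e lam N \<epsilon> (v s)) has_real_derivative D) (at t within {S..T}) \<and>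
                D + (\<alpha> t + lam 0 * \<mu> / 2) * Veps e lam N \<epsilon> (v t) \<le> 0) \<and>
           (\<exists>D. ((\<lambda>s. Veps e lam N (- \<epsilon>) (v s)) has_real_derivative D) (at t within {S..T}) \<and>
                D + (\<alpha> t - lam 0 * \<mu> / 2) * Veps e lam N (- \<epsilon>) (v t) \<le> 0)))"
proof -
  obtain ap where ap: "\<And>t. \<alpha> t \<le> ap" and "0 < \<mu>" and "0 < ap"
    using assms(3) unfolding strong_cone_condition_def by (meson less_le_trans)
  define B where "B = 4 * (\<Sum>n<N. lam n + L) + 2 * ap / lam 0 + 3 * \<mu> / 2"
  have "0 < B"
    unfolding B_def using \<open>0 < \<mu>\<close> \<open>0 < ap\<close> spectral_basis_eigenvalues[OF assms(1)]
      bounded_op_family_bound(1)[OF assms(2)]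
    by (smt (verit, best) divide_pos_pos sum_nonneg)
  define \<epsilon>0 where "\<epsilon>0 = min 1 (\<mu> / (2 * B))"
  have "0 < \<epsilon>0" unfolding \<epsilon>0_def using \<open>0 < \<mu>\<close> \<open>0 < B\<close> by simp
  have small: "\<epsilon> \<le> 1" "\<epsilon> * B \<le> \<mu> / 2" if "\<epsilon> < \<epsilon>0" for \<epsilon>
    using that \<open>0 < B\<close> unfolding \<epsilon>0_def by (auto simp: field_simps)
  show ?thesis
    by (intro exI[of _ \<epsilon>0] conjI \<open>0 < \<epsilon>0\<close> allI impI ballI Veps_derivative_estimates[OF assms ap])
       (use small in \<open>auto simp: B_def\<close>)
qed
end
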